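(* Let $T$ be a complete theory with monster model $\mathcal{U}$, $A\subseteq\mathcal{U}$ small, $\mu\in\mathfrak{M}_x(\mathcal{U})$, $\nu\in\mathfrak{M}_y(\mathcal{U})$. If $\mu$ is smooth over $A$ and $\mu\geq_{\mathbb{E},A}\nu$, then $\nu$ is smooth over $A$.
   Context: For $C\subseteq\mathcal{U}$, $\mathcal{L}_x(C)$ is the Boolean algebra of formulas in $x$ with parameters from $C$ modulo $T$, embedded in $\mathcal{L}_{xy}(C)$ via $\varphi(x)\mapsto\varphi(x)\wedge y=y$; $\mathfrak{M}_x(C)$ is the set of finitely additive probability measures on $\mathcal{L}_x(C)$. For $\omega\in\mathfrak{M}_{xy}(C)$, $\pi_x(\omega)(\varphi(x))=\omega(\varphi(x)\wedge y=y)$ (similarly $\pi_y$); $\omega|_D$ is restriction. $\mu\geq_{\mathbb{E},A}\nu$ means there is $\lambda\in\mathfrak{M}_{xy}(A)$ with $\pi_x(\lambda)=\mu|_A$ such that every $\omega\in\mathfrak{M}_{xy}(\mathcal{U})$ with $\omega|_A=\lambda$ and $\pi_x(\omega)=\mu$ satisfies $\pi_y(\omega)=\nu$. A global measure $\mu$ is smooth over $A$ if every global measure (in the same variables) agreeing with $\mu$ on $\mathcal{L}_x(A)$ equals $\mu$. *)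

theory Defs
  imports Complex_Main
begin

datatype ('f, 'a) trm = Var nat | Par 'a | Fn 'f "('f, 'a) trm list"

datatype ('f, 'r, 'a) fm =
    Tru
  | Eq "('f, 'a) trm" "('f, 'a) trm"
  | Rel 'r "('f, 'a) trm list"
  | Neg "('f, 'r, 'a) fm"
  | Conj "('f, 'r, 'a) fm" "('f, 'r, 'a) fm"
  | Ex nat "('f, 'r, 'a) fm"

definition Disj :: "('f, 'r, 'a) fm \<Rightarrow> ('f, 'r, 'a) fm \<Rightarrow> ('f, 'r, 'a) fm" where
  "Disj \<phi> \<psi> = Neg (Conj (Neg \<phi>) (Neg \<psi>))"

definition Fls :: "('f, 'r, 'a) fm" where
  "Fls = Neg Tru"

record ('f, 'r) sig =
  fun_ar :: "'f \<Rightarrow> nat"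
  rel_ar :: "'r \<Rightarrow> nat"

record ('a, 'f, 'r) str =
  dom :: "'a set"
  fun_int :: "'f \<Rightarrow> 'a list \<Rightarrow> 'a"
  rel_int :: "'r \<Rightarrow> 'a list \<Rightarrow> bool"

fun wf_trm :: "('f, 'r) sig \<Rightarrow> ('f, 'a) trm \<Rightarrow> bool" where
  "wf_trm L (Var n) = True"
| "wf_trm L (Par a) = True"
| "wf_trm L (Fn f ts) = (length ts = fun_ar L f \<and> (\<forall>t\<in>set ts. wf_trm L t))"

fun wf_fm :: "('f, 'r) sig \<Rightarrow> ('f, 'r, 'a) fm \<Rightarrow> bool" where
  "wf_fm L Tru = True"
| "wf_fm L (Eq t u) = (wf_trm L t \<and> wf_trm L u)"
| "wf_fm L (Rel r ts) = (length ts = rel_ar L r \<and> (\<forall>t\<in>set ts. wf_trm L t))"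
| "wf_fm L (Neg \<phi>) = wf_fm L \<phi>"
| "wf_fm L (Conj \<phi> \<psi>) = (wf_fm L \<phi> \<and> wf_fm L \<psi>)"
| "wf_fm L (Ex v \<phi>) = wf_fm L \<phi>"

fun vars_trm :: "('f, 'a) trm \<Rightarrow> nat set" where
  "vars_trm (Var n) = {n}"
| "vars_trm (Par a) = {}"
| "vars_trm (Fn f ts) = (\<Union>t\<in>set ts. vars_trm t)"

fun pars_trm :: "('f, 'a) trm \<Rightarrow> 'a set" where
  "pars_trm (Var n) = {}"
| "pars_trm (Par a) = {a}"
| "pars_trm (Fn f ts) = (\<Union>t\<in>set ts. pars_trm t)"

fun fv :: "('f, 'r, 'a) fm \<Rightarrow> nat set" where
  "fv Tru = {}"
| "fv (Eq t u) = vars_trm t \<union> vars_trm u"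
| "fv (Rel r ts) = (\<Union>t\<in>set ts. vars_trm t)"
| "fv (Neg \<phi>) = fv \<phi>"
| "fv (Conj \<phi> \<psi>) = fv \<phi> \<union> fv \<psi>"
| "fv (Ex v \<phi>) = fv \<phi> - {v}"

fun pars :: "('f, 'r, 'a) fm \<Rightarrow> 'a set" where
  "pars Tru = {}"
| "pars (Eq t u) = pars_trm t \<union> pars_trm u"
| "pars (Rel r ts) = (\<Union>t\<in>set ts. pars_trm t)"
| "pars (Neg \<phi>) = pars \<phi>"
| "pars (Conj \<phi> \<psi>) = pars \<phi> \<union> pars \<psi>"
| "pars (Ex v \<phi>) = pars \<phi>"

fun eval :: "('a, 'f, 'r) str \<Rightarrow> (nat \<Rightarrow> 'a) \<Rightarrow> ('f, 'a) trm \<Rightarrow> 'a" where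
  "eval M s (Var n) = s n"
| "eval M s (Par a) = a"
| "eval M s (Fn f ts) = fun_int M f (map (eval M s) ts)"

fun sat :: "('a, 'f, 'r) str \<Rightarrow> (nat \<Rightarrow> 'a) \<Rightarrow> ('f, 'r, 'a) fm \<Rightarrow> bool" where
  "sat M s Tru = True"
| "sat M s (Eq t u) = (eval M s t = eval M s u)"
| "sat M s (Rel r ts) = rel_int M r (map (eval M s) ts)"
| "sat M s (Neg \<phi>) = (\<not> sat M s \<phi>)"
| "sat M s (Conj \<phi> \<psi>) = (sat M s \<phi> \<and> sat M s \<psi>)"
| "sat M s (Ex v \<phi>) = (\<exists>a\<in>dom M. sat M (s(v := a)) \<phi>)"

definition is_structure :: "('f, 'r) sig \<Rightarrow> ('a, 'f, 'r) str \<Rightarrow> bool" where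
  "is_structure L M \<longleftrightarrow> dom M \<noteq> {} \<and>
     (\<forall>f as. length as = fun_ar L f \<and> set as \<subseteq> dom M \<longrightarrow> fun_int M f as \<in> dom M)"

definition assignment :: "('a, 'f, 'r) str \<Rightarrow> (nat \<Rightarrow> 'a) \<Rightarrow> bool" where
  "assignment M s \<longleftrightarrow> (\<forall>n. s n \<in> dom M)"

definition sentence :: "('f, 'r) sig \<Rightarrow> ('f, 'r, 'a) fm \<Rightarrow> bool" where
  "sentence L \<phi> \<longleftrightarrow> wf_fm L \<phi> \<and> fv \<phi> = {} \<and> pars \<phi> = {}"

definition models :: "('a, 'f, 'r) str \<Rightarrow> ('f, 'r, 'a) fm set \<Rightarrow> bool" where
  "models M T \<longleftrightarrow> (\<forall>\<phi>\<in>T. \<forall>s. assignment M s \<longrightarrow> sat M s \<phi>)"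

definition complete_theory :: "('f, 'r) sig \<Rightarrow> ('f, 'r, 'a) fm set \<Rightarrow> bool" where
  "complete_theory L T \<longleftrightarrow> (\<forall>\<phi>\<in>T. sentence L \<phi>) \<and>
     (\<forall>\<phi>. sentence L \<phi> \<longrightarrow> \<phi> \<in> T \<or> Neg \<phi> \<in> T)"

definition small :: "'k rel \<Rightarrow> 'a set \<Rightarrow> bool" where
  "small \<kappa> A \<longleftrightarrow> (card_of A, \<kappa>) \<in> ordLess"

definition saturated :: "('f, 'r) sig \<Rightarrow> 'k rel \<Rightarrow> ('a, 'f, 'r) str \<Rightarrow> bool" where
  "saturated L \<kappa> M \<longleftrightarrow>
     (\<forall>C p. C \<subseteq> dom M \<and> small \<kappa> C \<and>
        (\<forall>\<phi>\<in>p. wf_fm L \<phi> \<and> fv \<phi> \<subseteq> {0} \<and> pars \<phi> \<subseteq> C) \<and>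
        (\<forall>q. q \<subseteq> p \<and> finite q \<longrightarrow> (\<exists>a\<in>dom M. \<forall>\<phi>\<in>q. sat M (\<lambda>_. a) \<phi>))
      \<longrightarrow> (\<exists>a\<in>dom M. \<forall>\<phi>\<in>p. sat M (\<lambda>_. a) \<phi>))"

definition automorphism :: "('f, 'r) sig \<Rightarrow> ('a, 'f, 'r) str \<Rightarrow> ('a \<Rightarrow> 'a) \<Rightarrow> bool" where
  "automorphism L M g \<longleftrightarrow> bij_betw g (dom M) (dom M) \<and>
     (\<forall>f as. length as = fun_ar L f \<and> set as \<subseteq> dom M \<longrightarrow>
         g (fun_int M f as) = fun_int M f (map g as)) \<and>
     (\<forall>r as. length as = rel_ar L r \<and> set as \<subseteq> dom M \<longrightarrow>
         rel_int M r as = rel_int M r (map g as))"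

definition partial_elementary :: "('f, 'r) sig \<Rightarrow> ('a, 'f, 'r) str \<Rightarrow> 'a set \<Rightarrow> ('a \<Rightarrow> 'a) \<Rightarrow> bool" where
  "partial_elementary L M C h \<longleftrightarrow> C \<subseteq> dom M \<and> h ` C \<subseteq> dom M \<and>
     (\<forall>\<phi> s. wf_fm L \<phi> \<and> pars \<phi> = {} \<and> (\<forall>n. s n \<in> C) \<longrightarrow>
        (sat M s \<phi> \<longleftrightarrow> sat M (h \<circ> s) \<phi>))"

definition strongly_homogeneous :: "('f, 'r) sig \<Rightarrow> 'k rel \<Rightarrow> ('a, 'f, 'r) str \<Rightarrow> bool" where
  "strongly_homogeneous L \<kappa> M \<longleftrightarrow>
     (\<forall>C h. small \<kappa> C \<and> partial_elementary L M C h \<longrightarrow>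
        (\<exists>g. automorphism L M g \<and> (\<forall>c\<in>C. g c = h c)))"

definition monster :: "('f, 'r) sig \<Rightarrow> ('f, 'r, 'a) fm set \<Rightarrow> 'k rel \<Rightarrow> ('a, 'f, 'r) str \<Rightarrow> bool" where
  "monster L T \<kappa> U \<longleftrightarrow> is_structure L U \<and> models U T \<and>
     Card_order \<kappa> \<and> \<not> finite (Field \<kappa>) \<and>
     (card_of (UNIV :: 'f set), \<kappa>) \<in> ordLess \<and> (card_of (UNIV :: 'r set), \<kappa>) \<in> ordLess \<and>
     saturated L \<kappa> U \<and> strongly_homogeneous L \<kappa> U"

text \<open>L_x(C): formulas whose free variables lie among the variables X (the tuple x), with
parameters from C. Two such formulas are identified modulo T, i.e. when they are equivalent
in the monster model U.\<close>
definition Lx :: "('f, 'r) sig \<Rightarrow> nat set \<Rightarrow> 'a set \<Rightarrow> ('f, 'r, 'a) fm set" where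
  "Lx L X C = {\<phi>. wf_fm L \<phi> \<and> fv \<phi> \<subseteq> X \<and> pars \<phi> \<subseteq> C}"

definition equiv_in :: "('a, 'f, 'r) str \<Rightarrow> ('f, 'r, 'a) fm \<Rightarrow> ('f, 'r, 'a) fm \<Rightarrow> bool" where
  "equiv_in U \<phi> \<psi> \<longleftrightarrow> (\<forall>s. assignment U s \<longrightarrow> (sat U s \<phi> \<longleftrightarrow> sat U s \<psi>))"

text \<open>A finitely additive probability measure on the Boolean algebra L_x(C), represented as a
real function on formulas that is invariant under equivalence (values outside L_x(C) are
irrelevant).\<close>
definition keisler :: "('f, 'r) sig \<Rightarrow> ('a, 'f, 'r) str \<Rightarrow> nat set \<Rightarrow> 'a set
    \<Rightarrow> (('f, 'r, 'a) fm \<Rightarrow> real) \<Rightarrow> bool" where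
  "keisler L U X C \<mu> \<longleftrightarrow>
     (\<forall>\<phi>\<in>Lx L X C. \<forall>\<psi>\<in>Lx L X C. equiv_in U \<phi> \<psi> \<longrightarrow> \<mu> \<phi> = \<mu> \<psi>) \<and>
     (\<forall>\<phi>\<in>Lx L X C. 0 \<le> \<mu> \<phi>) \<and>
     \<mu> Tru = 1 \<and>
     (\<forall>\<phi>\<in>Lx L X C. \<forall>\<psi>\<in>Lx L X C. equiv_in U (Conj \<phi> \<psi>) Fls \<longrightarrow>
        \<mu> (Disj \<phi> \<psi>) = \<mu> \<phi> + \<mu> \<psi>)"

definition agree_on :: "('f, 'r) sig \<Rightarrow> nat set \<Rightarrow> 'a set
    \<Rightarrow> (('f, 'r, 'a) fm \<Rightarrow> real) \<Rightarrow> (('f, 'r, 'a) fm \<Rightarrow> real) \<Rightarrow> bool" where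
  "agree_on L X C \<mu> \<nu> \<longleftrightarrow> (\<forall>\<phi>\<in>Lx L X C. \<mu> \<phi> = \<nu> \<phi>)"

definition triv_eq :: "nat set \<Rightarrow> ('f, 'r, 'a) fm" where
  "triv_eq Y = foldr (\<lambda>v \<phi>. Conj (Eq (Var v) (Var v)) \<phi>) (sorted_list_of_set Y) Tru"

definition marg :: "nat set \<Rightarrow> (('f, 'r, 'a) fm \<Rightarrow> real) \<Rightarrow> (('f, 'r, 'a) fm \<Rightarrow> real)" where
  "marg Y \<omega> = (\<lambda>\<phi>. \<omega> (Conj \<phi> (triv_eq Y)))"

definition smooth :: "('f, 'r) sig \<Rightarrow> ('a, 'f, 'r) str \<Rightarrow> nat set \<Rightarrow> 'a set
    \<Rightarrow> (('f, 'r, 'a) fm \<Rightarrow> real) \<Rightarrow> bool" where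
  "smooth L U X A \<mu> \<longleftrightarrow>
     (\<forall>\<mu>'. keisler L U X (dom U) \<mu>' \<and> agree_on L X A \<mu>' \<mu> \<longrightarrow> agree_on L X (dom U) \<mu>' \<mu>)"

definition E_geq :: "('f, 'r) sig \<Rightarrow> ('a, 'f, 'r) str \<Rightarrow> nat set \<Rightarrow> nat set \<Rightarrow> 'a set
    \<Rightarrow> (('f, 'r, 'a) fm \<Rightarrow> real) \<Rightarrow> (('f, 'r, 'a) fm \<Rightarrow> real) \<Rightarrow> bool" where
  "E_geq L U X Y A \<mu> \<nu> \<longleftrightarrow>
     (\<exists>lam. keisler L U (X \<union> Y) A lam \<and> agree_on L X A (marg Y lam) \<mu> \<and>
        (\<forall>\<omega>. keisler L U (X \<union> Y) (dom U) \<omega> \<and> agree_on L (X \<union> Y) A \<omega> lam \<and>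
              agree_on L X (dom U) (marg Y \<omega>) \<mu>
           \<longrightarrow> agree_on L Y (dom U) (marg X \<omega>) \<nu>))"

end

(*
  Let lam witness mu >=_{E,A} nu. Global measures are the same as coherent (in de Finetti's
  sense) prices for all definable sets of assignments, and every coherent book extends to such
  a total pricing (Zorn's lemma plus a one-event Hahn-Banach step). Any global extension of lam
  has x-marginal extending mu|A, hence equal to mu by smoothness, so its y-marginal is nu; in
  particular lam agrees with nu on L_y(A).

  Now let nu' agree with nu on A and let psi(y) be a formula over U. A bet on psi built from
  formulas over A is dominated by the A-definable set "exists x. the bet pays off", which has the
  same measure under lam, nu and nu'. Hence the book of lam stays coherent when psi is priced at
  nu'(psi); extending it to a global measure and applying the first paragraph gives
  nu'(psi) = nu(psi).
*)

theory Submission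
  imports Defs "HOL-Library.Indicator_Function"
begin

section \<open>Coherent books\<close>

text \<open>A bet is a list of entries (c, (a, v)): c units of the indicator of the event a, bought at
the quoted price v per unit.\<close>

definition payoff :: "(real \<times> ('s set \<times> real)) list \<Rightarrow> 's \<Rightarrow> real" where
  "payoff B x = (\<Sum>q\<leftarrow>B. fst q * indicator (fst (snd q)) x)"

definition price :: "(real \<times> ('s set \<times> real)) list \<Rightarrow> real" where
  "price B = (\<Sum>q\<leftarrow>B. fst q * snd (snd q))"

definition scale_bet :: "real \<Rightarrow> (real \<times> 'b) list \<Rightarrow> (real \<times> 'b) list" where
  "scale_bet k B = map (\<lambda>q. (k * fst q, snd q)) B"

definition coherent :: "'s set \<Rightarrow> ('s set \<times> real) set \<Rightarrow> bool" where
  "coherent \<Omega> R \<longleftrightarrow>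
     (\<forall>B. set (map snd B) \<subseteq> R \<longrightarrow> (\<forall>x\<in>\<Omega>. payoff B x \<le> 0) \<longrightarrow> price B \<le> 0)"

lemma payoff_simps [simp]:
  "payoff [] x = 0"
  "payoff (q # B) x = fst q * indicator (fst (snd q)) x + payoff B x"
  "payoff (B @ B') x = payoff B x + payoff B' x"
  "payoff (scale_bet k B) x = k * payoff B x"
  by (simp_all add: payoff_def scale_bet_def o_def sum_list_const_mult mult.assoc)

lemma price_simps [simp]:
  "price [] = 0"
  "price (q # B) = fst q * snd (snd q) + price B"
  "price (B @ B') = price B + price B'"
  "price (scale_bet k B) = k * price B"
  by (simp_all add: price_def scale_bet_def o_def sum_list_const_mult mult.assoc)

lemma map_snd_scale_bet [simp]: "map snd (scale_bet k B) = map snd B"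
  by (simp add: scale_bet_def o_def)

lemma coherentD:
  "coherent \<Omega> R \<Longrightarrow> set (map snd B) \<subseteq> R \<Longrightarrow> (\<And>x. x \<in> \<Omega> \<Longrightarrow> payoff B x \<le> 0) \<Longrightarrow> price B \<le> 0"
  unfolding coherent_def by blast

lemma coherent_subset: "coherent \<Omega> R \<Longrightarrow> R' \<subseteq> R \<Longrightarrow> coherent \<Omega> R'"
  unfolding coherent_def by blast

lemma coherent_unique:
  assumes "coherent \<Omega> R" "(a, v) \<in> R" "(a, w) \<in> R"
  shows "v = w"
proof -
  have "price [(1, (a, v)), (-1, (a, w))] \<le> 0" "price [(1, (a, w)), (-1, (a, v))] \<le> 0"
    by (rule coherentD[OF assms(1)]; use assms in simp)+
  then show ?thesis by simp
qed

lemma bet_split: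
  assumes "set (map snd B) \<subseteq> insert (a, v) R"
  obtains B' t where "set (map snd B') \<subseteq> R"
    and "\<And>x. payoff B x = t * indicator a x + payoff B' x" and "price B = t * v + price B'"
  using assms
proof (induction B arbitrary: thesis)
  case Nil
  show ?case by (rule Nil.prems(1)[of "[]" 0]) simp_all
next
  case (Cons q B)
  obtain B' t where B': "set (map snd B') \<subseteq> R"
    "\<And>x. payoff B x = t * indicator a x + payoff B' x" "price B = t * v + price B'"
    using Cons.IH Cons.prems(2) by auto
  show ?case
  proof (cases "snd q = (a, v)")
    case True
    show ?thesis by (rule Cons.prems(1)[of B' "fst q + t"]) (use B' True in \<open>simp_all add: algebra_simps\<close>)
  next
    case False
    show ?thesis by (rule Cons.prems(1)[of "q # B'" t]) (use B' False Cons.prems(2) in \<open>auto simp: algebra_simps\<close>)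
  qed
qed

lemma bet_in_image:
  assumes "set (map snd B) \<subseteq> f ` D"
  shows "\<exists>F. set (map snd F) \<subseteq> D \<and> B = map (\<lambda>q. (fst q, f (snd q))) F"
  using assms
proof (induction B)
  case (Cons q B)
  then obtain F \<phi> where "set (map snd F) \<subseteq> D" "B = map (\<lambda>q. (fst q, f (snd q))) F"
    and "\<phi> \<in> D" "snd q = f \<phi>" by auto
  then show ?case by (intro exI[of _ "(fst q, \<phi>) # F"]) (simp add: prod_eq_iff)
qed simp

lemma price_le_scaled:
  assumes bound: "\<And>B. set (map snd B) \<subseteq> R \<Longrightarrow> \<forall>x\<in>\<Omega>. payoff B x \<le> f x \<Longrightarrow> price B \<le> c"
    and "0 < k" and "set (map snd B) \<subseteq> R" and "\<forall>x\<in>\<Omega>. payoff B x \<le> k * f x"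
  shows "price B \<le> k * c"
proof -
  have "price (scale_bet (1 / k) B) \<le> c"
  proof (rule bound)
    show "\<forall>x\<in>\<Omega>. payoff (scale_bet (1 / k) B) x \<le> f x"
      using assms(2,4) by (simp add: pos_divide_le_eq mult.commute)
  qed (use assms(3) in simp)
  then show ?thesis using assms(2) by (simp add: pos_divide_le_eq mult.commute)
qed

lemma coherent_insert:
  assumes coh: "coherent \<Omega> R" and sure: "(\<Omega>, 1) \<in> R"
    and lower: "\<And>B. set (map snd B) \<subseteq> R \<Longrightarrow> \<forall>x\<in>\<Omega>. payoff B x \<le> indicator a x \<Longrightarrow> price B \<le> v"
    and upper: "\<And>B. set (map snd B) \<subseteq> R \<Longrightarrow> \<forall>x\<in>\<Omega>. payoff B x \<le> indicator (\<Omega> - a) x \<Longrightarrow> price B \<le> 1 - v"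
  shows "coherent \<Omega> (insert (a, v) R)"
  unfolding coherent_def
proof (intro allI impI)
  fix B assume B: "set (map snd B) \<subseteq> insert (a, v) R" and nonpos: "\<forall>x\<in>\<Omega>. payoff B x \<le> 0"
  obtain B' t where B': "set (map snd B') \<subseteq> R"
    and payoff_B: "\<And>x. payoff B x = t * indicator a x + payoff B' x" and price_B: "price B = t * v + price B'"
    by (rule bet_split[OF B]) blast
  have bound: "payoff B' x \<le> - t * indicator a x" if "x \<in> \<Omega>" for x
    using bspec[OF nonpos that] unfolding payoff_B by linarith
  consider "t = 0" | "t < 0" | "t > 0" by linarith
  then show "price B \<le> 0"
  proof cases
    case 1
    have "price B' \<le> 0" by (rule coherentD[OF coh B']) (use bound 1 in simp)
    then show ?thesis using price_B 1 by simp
  next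
    case 2
    have "price B' \<le> - t * v" by (rule price_le_scaled[OF lower]) (use 2 B' bound in auto)
    then show ?thesis using price_B by simp
  next
    case 3
    have "\<forall>x\<in>\<Omega>. payoff ((t, (\<Omega>, 1)) # B') x \<le> t * indicator (\<Omega> - a) x"
    proof
      fix x assume "x \<in> \<Omega>"
      with bound[OF this] show "payoff ((t, (\<Omega>, 1)) # B') x \<le> t * indicator (\<Omega> - a) x"
        by (auto split: split_indicator)
    qed
    then have "price ((t, (\<Omega>, 1)) # B') \<le> t * (1 - v)"
      by (intro price_le_scaled[OF upper]) (use 3 B' sure in auto)
    then show ?thesis using price_B by (simp add: algebra_simps)
  qed
qed

lemma coherent_price_le_one:
  assumes "coherent \<Omega> R" and "(\<Omega>, 1) \<in> R"
    and "set (map snd B) \<subseteq> R" and "\<forall>x\<in>\<Omega>. payoff B x \<le> 1"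
  shows "price B \<le> 1"
proof -
  have "price (B @ [(-1, (\<Omega>, 1))]) \<le> 0"
    by (rule coherentD[OF assms(1)]) (use assms(2-4) in auto)
  then show ?thesis by simp
qed

lemma coherent_insert_exists:
  assumes coh: "coherent \<Omega> R" and sure: "(\<Omega>, 1) \<in> R"
  shows "\<exists>v. coherent \<Omega> (insert (a, v) R)"
proof -
  define lowers where
    "lowers = {price B | B. set (map snd B) \<subseteq> R \<and> (\<forall>x\<in>\<Omega>. payoff B x \<le> indicator a x)}"
  have "0 \<in> lowers"
    unfolding lowers_def by (rule CollectI, rule exI[of _ "[]"]) simp
  then have nonempty: "lowers \<noteq> {}" by blast
  have "bdd_above lowers"
  proof (rule bdd_aboveI)
    fix y assume "y \<in> lowers"
    then obtain B where B: "y = price B" "set (map snd B) \<subseteq> R" "\<forall>x\<in>\<Omega>. payoff B x \<le> indicator a x"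
      unfolding lowers_def by blast
    have "\<forall>x\<in>\<Omega>. payoff B x \<le> 1" using B(3) by (meson indicator_le_1 order_trans)
    then show "y \<le> 1" using coherent_price_le_one[OF coh sure B(2)] B(1) by simp
  qed
  have "coherent \<Omega> (insert (a, Sup lowers) R)"
  proof (rule coherent_insert[OF coh sure])
    fix B assume "set (map snd B) \<subseteq> R" "\<forall>x\<in>\<Omega>. payoff B x \<le> indicator a x"
    then have "price B \<in> lowers" unfolding lowers_def by blast
    then show "price B \<le> Sup lowers" using \<open>bdd_above lowers\<close> by (rule cSup_upper)
  next
    fix B assume B: "set (map snd B) \<subseteq> R" "\<forall>x\<in>\<Omega>. payoff B x \<le> indicator (\<Omega> - a) x"
    have "Sup lowers \<le> 1 - price B"
    proof (rule cSup_least[OF nonempty])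
      fix y assume "y \<in> lowers"
      then obtain B' where B': "y = price B'" "set (map snd B') \<subseteq> R" "\<forall>x\<in>\<Omega>. payoff B' x \<le> indicator a x"
        unfolding lowers_def by blast
      have "\<forall>x\<in>\<Omega>. payoff (B' @ B) x \<le> 1"
      proof
        fix x assume "x \<in> \<Omega>"
        then have "payoff B' x \<le> indicator a x" "payoff B x \<le> indicator (\<Omega> - a) x"
            "indicator a x + indicator (\<Omega> - a) x = (1 :: real)"
          using B(2) B'(3) by (auto split: split_indicator)
        then show "payoff (B' @ B) x \<le> 1" by simp
      qed
      moreover have "set (map snd (B' @ B)) \<subseteq> R" using B(1) B'(2) by simp
      ultimately have "price (B' @ B) \<le> 1" using coherent_price_le_one[OF coh sure] by blast
      then show "y \<le> 1 - price B" using B'(1) by simp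
    qed
    then show "price B \<le> 1 - Sup lowers" by simp
  qed
  then show ?thesis by blast
qed

lemma coherent_Union_chain:
  assumes "\<C> \<noteq> {}" "subset.chain \<A> \<C>" "\<And>R. R \<in> \<C> \<Longrightarrow> coherent \<Omega> R"
  shows "coherent \<Omega> (\<Union>\<C>)"
  unfolding coherent_def
proof (intro allI impI)
  fix B assume B: "set (map snd B) \<subseteq> \<Union>\<C>" and nonpos: "\<forall>x\<in>\<Omega>. payoff B x \<le> 0"
  obtain R where "R \<in> \<C>" "set (map snd B) \<subseteq> R"
    using finite_subset_Union_chain[OF finite_set B assms(1,2)] .
  then show "price B \<le> 0" using coherentD[OF assms(3)] nonpos by blast
qed

lemma coherent_extend_total:
  assumes coh: "coherent \<Omega> R" and sure: "(\<Omega>, 1) \<in> R"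
  obtains m where "coherent \<Omega> (range (\<lambda>a. (a, m a)))" and "R \<subseteq> range (\<lambda>a. (a, m a))"
proof -
  define \<A> where "\<A> = {R'. R \<subseteq> R' \<and> coherent \<Omega> R'}"
  have "\<exists>M\<in>\<A>. \<forall>R'\<in>\<A>. M \<subseteq> R' \<longrightarrow> R' = M"
  proof (rule subset_Zorn_nonempty)
    show "\<A> \<noteq> {}" using coh unfolding \<A>_def by blast
    fix \<C> assume nonempty: "\<C> \<noteq> {}" and chain: "subset.chain \<A> \<C>"
    then have members: "R \<subseteq> R' \<and> coherent \<Omega> R'" if "R' \<in> \<C>" for R'
      using that unfolding subset_chain_def \<A>_def by blast
    have "coherent \<Omega> (\<Union>\<C>)" using coherent_Union_chain[OF nonempty chain] members by blast
    moreover have "R \<subseteq> \<Union>\<C>" using nonempty members by blast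
    ultimately show "\<Union>\<C> \<in> \<A>" unfolding \<A>_def by blast
  qed
  then obtain M where "M \<in> \<A>" and maximal: "\<And>R'. R' \<in> \<A> \<Longrightarrow> M \<subseteq> R' \<Longrightarrow> R' = M"
    by blast
  then have M: "R \<subseteq> M" "coherent \<Omega> M" unfolding \<A>_def by simp_all
  have "\<exists>v. (a, v) \<in> M" for a
  proof -
    obtain v where "coherent \<Omega> (insert (a, v) M)"
      using coherent_insert_exists[OF M(2)] sure M(1) by blast
    then have "insert (a, v) M = M" using M(1) by (intro maximal) (auto simp: \<A>_def)
    then show ?thesis by blast
  qed
  then obtain m where m: "\<And>a. (a, m a) \<in> M" by metis
  show ?thesis
  proof
    show "coherent \<Omega> (range (\<lambda>a. (a, m a)))" by (rule coherent_subset[OF M(2)]) (use m in auto)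
    show "R \<subseteq> range (\<lambda>a. (a, m a))"
    proof
      fix p assume "p \<in> R"
      moreover obtain a v where p: "p = (a, v)" by fastforce
      ultimately have "v = m a" using coherent_unique[OF M(2) _ m] M(1) by blast
      then show "p \<in> range (\<lambda>a. (a, m a))" using p by simp
    qed
  qed
qed

lemma coherent_total_nonneg:
  assumes "coherent \<Omega> (range (\<lambda>a. (a, m a)))"
  shows "0 \<le> m a"
proof -
  have "price [(-1, (a, m a))] \<le> 0" by (rule coherentD[OF assms]) auto
  then show ?thesis by simp
qed

lemma coherent_total_additive:
  assumes "coherent \<Omega> (range (\<lambda>a. (a, m a)))" and "a \<inter> b = {}"
  shows "m (a \<union> b) = m a + m b"
proof -
  have union: "indicator (a \<union> b) x = (indicator a x + indicator b x :: real)" for x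
    using assms(2) by (rule indicator_disj_union)
  have "price [(1, (a \<union> b, m (a \<union> b))), (-1, (a, m a)), (-1, (b, m b))] \<le> 0"
    and "price [(-1, (a \<union> b, m (a \<union> b))), (1, (a, m a)), (1, (b, m b))] \<le> 0"
    by (rule coherentD[OF assms(1)]; simp add: union)+
  then show ?thesis by simp
qed

section \<open>Definable sets and Keisler measures\<close>

abbreviation assignments :: "('a, 'f, 'r) str \<Rightarrow> (nat \<Rightarrow> 'a) set" where
  "assignments U \<equiv> {s. assignment U s}"

definition sat_set :: "('a, 'f, 'r) str \<Rightarrow> ('f, 'r, 'a) fm \<Rightarrow> (nat \<Rightarrow> 'a) set" where
  "sat_set U \<phi> = {s. assignment U s \<and> sat U s \<phi>}"

lemma equiv_in_iff_sat_set: "equiv_in U \<phi> \<psi> \<longleftrightarrow> sat_set U \<phi> = sat_set U \<psi>"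
  unfolding equiv_in_def sat_set_def by auto

lemma sat_Disj [simp]: "sat M s (Disj \<phi> \<psi>) \<longleftrightarrow> sat M s \<phi> \<or> sat M s \<psi>"
  and fv_Disj [simp]: "fv (Disj \<phi> \<psi>) = fv \<phi> \<union> fv \<psi>"
  and pars_Disj [simp]: "pars (Disj \<phi> \<psi>) = pars \<phi> \<union> pars \<psi>"
  and wf_fm_Disj [simp]: "wf_fm L (Disj \<phi> \<psi>) \<longleftrightarrow> wf_fm L \<phi> \<and> wf_fm L \<psi>"
  by (simp_all add: Disj_def)

lemma sat_Fls [simp]: "\<not> sat M s Fls"
  and fv_Fls [simp]: "fv Fls = {}"
  and pars_Fls [simp]: "pars Fls = {}"
  and wf_fm_Fls [simp]: "wf_fm L Fls"
  by (simp_all add: Fls_def)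

lemma sat_set_simps [simp]:
  "sat_set U Tru = assignments U"
  "sat_set U Fls = {}"
  "sat_set U (Conj \<phi> \<psi>) = sat_set U \<phi> \<inter> sat_set U \<psi>"
  "sat_set U (Disj \<phi> \<psi>) = sat_set U \<phi> \<union> sat_set U \<psi>"
  "sat_set U (Neg \<phi>) = assignments U - sat_set U \<phi>"
  by (auto simp: sat_set_def)

lemma sat_set_subset_assignments: "sat_set U \<phi> \<subseteq> assignments U"
  by (auto simp: sat_set_def)

lemma Lx_simps [simp]:
  "Tru \<in> Lx L Z C"
  "Fls \<in> Lx L Z C"
  "Conj \<phi> \<psi> \<in> Lx L Z C \<longleftrightarrow> \<phi> \<in> Lx L Z C \<and> \<psi> \<in> Lx L Z C"
  "Disj \<phi> \<psi> \<in> Lx L Z C \<longleftrightarrow> \<phi> \<in> Lx L Z C \<and> \<psi> \<in> Lx L Z C"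
  "Neg \<phi> \<in> Lx L Z C \<longleftrightarrow> \<phi> \<in> Lx L Z C"
  by (auto simp: Lx_def)

lemma Lx_mono: "\<phi> \<in> Lx L Z C \<Longrightarrow> Z \<subseteq> Z' \<Longrightarrow> C \<subseteq> C' \<Longrightarrow> \<phi> \<in> Lx L Z' C'"
  by (auto simp: Lx_def)

lemma eval_cong: "\<forall>n\<in>vars_trm t. s n = s' n \<Longrightarrow> eval M s t = eval M s' t"
proof (induction t)
  case (Fn f ts)
  then have "map (eval M s) ts = map (eval M s') ts" by (intro map_cong) auto
  then show ?case by (simp only: eval.simps)
qed auto

lemma sat_cong: "\<forall>n\<in>fv \<phi>. s n = s' n \<Longrightarrow> sat M s \<phi> \<longleftrightarrow> sat M s' \<phi>"
proof (induction \<phi> arbitrary: s s')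
  case (Eq t u)
  then show ?case using eval_cong[of t s s' M] eval_cong[of u s s' M] by auto
next
  case (Rel r ts)
  then have "map (eval M s) ts = map (eval M s') ts" by (intro map_cong) (auto intro: eval_cong)
  then show ?case by (simp only: sat.simps)
next
  case (Conj \<phi>1 \<phi>2)
  then show ?case by (metis UnCI fv.simps(5) sat.simps(5))
next
  case (Ex v \<phi>)
  have "sat M (s(v := a)) \<phi> \<longleftrightarrow> sat M (s'(v := a)) \<phi>" for a by (rule Ex.IH) (use Ex.prems in auto)
  then show ?case by simp
qed auto

lemma keisler_cong:
  assumes "keisler L U Z C m" "\<phi> \<in> Lx L Z C" "\<psi> \<in> Lx L Z C" "sat_set U \<phi> = sat_set U \<psi>"
  shows "m \<phi> = m \<psi>"
proof -
  have "equiv_in U \<phi> \<psi>" using assms(4) by (simp add: equiv_in_iff_sat_set)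
  moreover have "\<forall>\<phi>\<in>Lx L Z C. \<forall>\<psi>\<in>Lx L Z C. equiv_in U \<phi> \<psi> \<longrightarrow> m \<phi> = m \<psi>"
    using assms(1) unfolding keisler_def by (elim conjE)
  ultimately show ?thesis using assms(2,3) by blast
qed

lemma keisler_nonneg: "keisler L U Z C m \<Longrightarrow> \<phi> \<in> Lx L Z C \<Longrightarrow> 0 \<le> m \<phi>"
  unfolding keisler_def by blast

lemma keisler_Tru: "keisler L U Z C m \<Longrightarrow> m Tru = 1"
  unfolding keisler_def by blast

lemma keisler_Disj:
  assumes "keisler L U Z C m" "\<phi> \<in> Lx L Z C" "\<psi> \<in> Lx L Z C" "sat_set U \<phi> \<inter> sat_set U \<psi> = {}"
  shows "m (Disj \<phi> \<psi>) = m \<phi> + m \<psi>"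
proof -
  have "equiv_in U (Conj \<phi> \<psi>) Fls" using assms(4) by (simp add: equiv_in_iff_sat_set)
  moreover have "\<forall>\<phi>\<in>Lx L Z C. \<forall>\<psi>\<in>Lx L Z C. equiv_in U (Conj \<phi> \<psi>) Fls \<longrightarrow> m (Disj \<phi> \<psi>) = m \<phi> + m \<psi>"
    using assms(1) unfolding keisler_def by (elim conjE)
  ultimately show ?thesis using assms(2,3) by blast
qed

lemma keisler_split:
  assumes K: "keisler L U Z C m" and "\<psi> \<in> Lx L Z C" "\<phi> \<in> Lx L Z C"
  shows "m \<psi> = m (Conj \<psi> \<phi>) + m (Conj \<psi> (Neg \<phi>))"
proof -
  have "m \<psi> = m (Disj (Conj \<psi> \<phi>) (Conj \<psi> (Neg \<phi>)))"
    by (rule keisler_cong[OF K]) (use assms in \<open>auto simp: sat_set_def\<close>)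
  also have "\<dots> = m (Conj \<psi> \<phi>) + m (Conj \<psi> (Neg \<phi>))"
    by (rule keisler_Disj[OF K]) (use assms in auto)
  finally show ?thesis .
qed

lemma keisler_mono:
  assumes K: "keisler L U Z C m" and "\<phi> \<in> Lx L Z C" "\<psi> \<in> Lx L Z C"
    and "sat_set U \<phi> \<subseteq> sat_set U \<psi>"
  shows "m \<phi> \<le> m \<psi>"
proof -
  have "m (Conj \<psi> \<phi>) = m \<phi>" by (rule keisler_cong[OF K]) (use assms in auto)
  moreover have "0 \<le> m (Conj \<psi> (Neg \<phi>))" by (rule keisler_nonneg[OF K]) (use assms in auto)
  ultimately show ?thesis using keisler_split[OF K assms(3,2)] by simp
qed

lemma keisler_Neg:
  assumes K: "keisler L U Z C m" and "\<phi> \<in> Lx L Z C"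
  shows "m (Neg \<phi>) = 1 - m \<phi>"
proof -
  have "m (Conj Tru \<phi>) = m \<phi>" "m (Conj Tru (Neg \<phi>)) = m (Neg \<phi>)"
    by (rule keisler_cong[OF K]; use assms in \<open>auto simp: sat_set_def\<close>)+
  then show ?thesis using keisler_split[OF K, of Tru \<phi>] keisler_Tru[OF K] assms(2) by simp
qed

lemma keisler_of_coherent:
  assumes coh: "coherent (assignments U) (range (\<lambda>a. (a, m a)))"
    and sure: "m (assignments U) = 1"
  shows "keisler L U Z C (\<lambda>\<phi>. m (sat_set U \<phi>))"
  unfolding keisler_def equiv_in_iff_sat_set
proof (intro conjI ballI impI)
  show "m (sat_set U Tru) = 1" using sure by simp
  fix \<phi> show "0 \<le> m (sat_set U \<phi>)" using coh by (rule coherent_total_nonneg)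
next
  fix \<phi> \<psi> assume "sat_set U (Conj \<phi> \<psi>) = sat_set U Fls"
  then show "m (sat_set U (Disj \<phi> \<psi>)) = m (sat_set U \<phi>) + m (sat_set U \<psi>)"
    using coherent_total_additive[OF coh] by simp
qed simp

lemma keisler_Fls: "keisler L U Z C m \<Longrightarrow> m Fls = 0"
  using keisler_Neg[of L U Z C m Tru] keisler_Tru[of L U Z C m] by (simp add: Fls_def)

definition fm_bet :: "('a, 'f, 'r) str \<Rightarrow> (('f, 'r, 'a) fm \<Rightarrow> real) \<Rightarrow> (real \<times> ('f, 'r, 'a) fm) list
    \<Rightarrow> (real \<times> ((nat \<Rightarrow> 'a) set \<times> real)) list" where
  "fm_bet U m F = map (\<lambda>q. (fst q, (sat_set U (snd q), m (snd q)))) F"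

lemma fm_bet_simps [simp]:
  "fm_bet U m [] = []"
  "fm_bet U m (q # F) = (fst q, (sat_set U (snd q), m (snd q))) # fm_bet U m F"
  "fm_bet U m (F @ G) = fm_bet U m F @ fm_bet U m G"
  by (simp_all add: fm_bet_def)

lemma fm_bet_cong: "(\<And>\<phi>. \<phi> \<in> snd ` set F \<Longrightarrow> m \<phi> = m' \<phi>) \<Longrightarrow> fm_bet U m F = fm_bet U m' F"
  unfolding fm_bet_def by simp

lemma price_fm_bet_add:
  "price (fm_bet U (\<lambda>\<phi>. m \<phi> + m' \<phi>) F) = price (fm_bet U m F) + price (fm_bet U m' F)"
  by (induction F) (simp_all add: algebra_simps)

lemma bet_on_fm_quotes:
  "set (map snd B) \<subseteq> (\<lambda>\<phi>. (sat_set U \<phi>, m \<phi>)) ` D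
    \<Longrightarrow> \<exists>F. set (map snd F) \<subseteq> D \<and> B = fm_bet U m F"
  unfolding fm_bet_def by (rule bet_in_image)

lemma keisler_relative_price_split:
  assumes K: "keisler L U Z C m"
    and F: "set (map snd F) \<subseteq> Lx L Z C" and \<theta>: "\<theta> \<in> Lx L Z C" and \<phi>: "\<phi> \<in> Lx L Z C"
  shows "price (fm_bet U (\<lambda>\<alpha>. m (Conj \<alpha> \<theta>)) F)
      = price (fm_bet U (\<lambda>\<alpha>. m (Conj \<alpha> (Conj \<theta> \<phi>))) F)
        + price (fm_bet U (\<lambda>\<alpha>. m (Conj \<alpha> (Conj \<theta> (Neg \<phi>)))) F)"
proof -
  have split: "m (Conj \<alpha> \<theta>) = m (Conj \<alpha> (Conj \<theta> \<phi>)) + m (Conj \<alpha> (Conj \<theta> (Neg \<phi>)))"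
    if "\<alpha> \<in> Lx L Z C" for \<alpha>
  proof -
    have "m (Conj \<alpha> \<theta>) = m (Conj (Conj \<alpha> \<theta>) \<phi>) + m (Conj (Conj \<alpha> \<theta>) (Neg \<phi>))"
      by (rule keisler_split[OF K]) (use that \<theta> \<phi> in auto)
    moreover have "m (Conj (Conj \<alpha> \<theta>) \<phi>) = m (Conj \<alpha> (Conj \<theta> \<phi>))"
      and "m (Conj (Conj \<alpha> \<theta>) (Neg \<phi>)) = m (Conj \<alpha> (Conj \<theta> (Neg \<phi>)))"
      by (rule keisler_cong[OF K]; use that \<theta> \<phi> in auto)+
    ultimately show ?thesis by simp
  qed
  have "fm_bet U (\<lambda>\<alpha>. m (Conj \<alpha> \<theta>)) F
      = fm_bet U (\<lambda>\<alpha>. m (Conj \<alpha> (Conj \<theta> \<phi>)) + m (Conj \<alpha> (Conj \<theta> (Neg \<phi>)))) F"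
    by (rule fm_bet_cong) (use F split in auto)
  then show ?thesis by (simp only: price_fm_bet_add)
qed

text \<open>Refining along the formulas of the bet reduces the coherence of a Keisler measure to its
additivity; the relativisation to \<theta> makes the induction go through.\<close>

lemma keisler_relative_price_le:
  assumes K: "keisler L U Z C m"
  shows "set (map snd F) \<subseteq> Lx L Z C \<Longrightarrow> \<theta> \<in> Lx L Z C
    \<Longrightarrow> \<forall>s\<in>sat_set U \<theta>. payoff (fm_bet U m F) s \<le> d
    \<Longrightarrow> price (fm_bet U (\<lambda>\<phi>. m (Conj \<phi> \<theta>)) F) \<le> d * m \<theta>"
proof (induction F arbitrary: \<theta> d)
  case Nil
  show ?case
  proof (cases "sat_set U \<theta> = {}")
    case True
    then have "m \<theta> = m Fls" by (intro keisler_cong[OF K Nil(2)]) simp_all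
    then show ?thesis using keisler_Fls[OF K] by simp
  next
    case False
    then have "0 \<le> d" using Nil(3) by auto
    then show ?thesis using keisler_nonneg[OF K Nil(2)] by simp
  qed
next
  case (Cons q F)
  obtain c \<phi> where q: "q = (c, \<phi>)" by fastforce
  have \<phi>: "\<phi> \<in> Lx L Z C" and F: "set (map snd F) \<subseteq> Lx L Z C" and \<theta>: "\<theta> \<in> Lx L Z C"
    using Cons.prems q by auto
  have IH_pos: "price (fm_bet U (\<lambda>\<alpha>. m (Conj \<alpha> (Conj \<theta> \<phi>))) F) \<le> (d - c) * m (Conj \<theta> \<phi>)"
    by (rule Cons.IH[OF F]) (use \<theta> \<phi> Cons.prems(3) q in \<open>auto simp: sat_set_def\<close>)
  have IH_neg: "price (fm_bet U (\<lambda>\<alpha>. m (Conj \<alpha> (Conj \<theta> (Neg \<phi>)))) F) \<le> d * m (Conj \<theta> (Neg \<phi>))"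
    by (rule Cons.IH[OF F]) (use \<theta> \<phi> Cons.prems(3) q in \<open>auto simp: sat_set_def\<close>)
  have "m (Conj \<phi> \<theta>) = m (Conj \<theta> \<phi>)" by (rule keisler_cong[OF K]) (use \<theta> \<phi> in auto)
  then show ?case
    using IH_pos IH_neg keisler_relative_price_split[OF K F \<theta> \<phi>] keisler_split[OF K \<theta> \<phi>] q
    by (simp add: algebra_simps)
qed

lemma keisler_coherent:
  assumes K: "keisler L U Z C m"
  shows "coherent (assignments U) ((\<lambda>\<phi>. (sat_set U \<phi>, m \<phi>)) ` Lx L Z C)"
  unfolding coherent_def
proof (intro allI impI)
  fix B assume "set (map snd B) \<subseteq> (\<lambda>\<phi>. (sat_set U \<phi>, m \<phi>)) ` Lx L Z C"
    and nonpos: "\<forall>s\<in>assignments U. payoff B s \<le> 0"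
  then obtain F where F: "set (map snd F) \<subseteq> Lx L Z C" and B: "B = fm_bet U m F"
    by (blast dest: bet_on_fm_quotes)
  have "price (fm_bet U (\<lambda>\<phi>. m (Conj \<phi> Tru)) F) \<le> 0 * m Tru"
    by (rule keisler_relative_price_le[OF K F]) (use nonpos B in \<open>auto simp: sat_set_def\<close>)
  moreover have "fm_bet U (\<lambda>\<phi>. m (Conj \<phi> Tru)) F = fm_bet U m F"
    by (rule fm_bet_cong, rule keisler_cong[OF K]) (use F in \<open>auto simp: sat_set_def\<close>)
  ultimately show "price B \<le> 0" using B by simp
qed

fun Exs :: "nat list \<Rightarrow> ('f, 'r, 'a) fm \<Rightarrow> ('f, 'r, 'a) fm" where
  "Exs [] \<phi> = \<phi>"
| "Exs (v # vs) \<phi> = Ex v (Exs vs \<phi>)"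

lemma fv_Exs [simp]: "fv (Exs vs \<phi>) = fv \<phi> - set vs"
  and pars_Exs [simp]: "pars (Exs vs \<phi>) = pars \<phi>"
  and wf_fm_Exs [simp]: "wf_fm L (Exs vs \<phi>) \<longleftrightarrow> wf_fm L \<phi>"
  by (induction vs) auto

lemma sat_ExsI: "assignment U s \<Longrightarrow> sat U s \<phi> \<Longrightarrow> sat U s (Exs vs \<phi>)"
proof (induction vs)
  case (Cons v vs)
  then have "s v \<in> dom U" unfolding assignment_def by auto
  then show ?case using Cons by (auto intro!: bexI[of _ "s v"])
qed simp

lemma sat_ExsE:
  assumes "assignment U s" "sat U s (Exs vs \<phi>)"
  obtains s' where "assignment U s'" "\<And>n. n \<notin> set vs \<Longrightarrow> s' n = s n" "sat U s' \<phi>"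
  using assms
proof (induction vs arbitrary: s)
  case (Cons v vs)
  then obtain a where a: "a \<in> dom U" "sat U (s(v := a)) (Exs vs \<phi>)" by auto
  have s_upd: "assignment U (s(v := a))" using Cons.prems(2) a(1) unfolding assignment_def by auto
  show ?case
  proof (rule Cons.IH[OF _ s_upd a(2)])
    fix s' assume "assignment U s'" "\<And>n. n \<notin> set vs \<Longrightarrow> s' n = (s(v := a)) n" "sat U s' \<phi>"
    then show thesis by (intro Cons.prems(1)) auto
  qed
qed simp

fun payoff_gt :: "(real \<times> ('f, 'r, 'a) fm) list \<Rightarrow> real \<Rightarrow> ('f, 'r, 'a) fm" where
  "payoff_gt [] d = (if d < 0 then Tru else Fls)"
| "payoff_gt (q # F) d =
     Disj (Conj (snd q) (payoff_gt F (d - fst q))) (Conj (Neg (snd q)) (payoff_gt F d))"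

lemma sat_payoff_gt:
  "assignment U s \<Longrightarrow> sat U s (payoff_gt F d) \<longleftrightarrow> d < payoff (fm_bet U m F) s"
proof (induction F arbitrary: d)
  case (Cons q F)
  show ?case
  proof (cases "sat U s (snd q)")
    case True
    then have "s \<in> sat_set U (snd q)" using Cons.prems by (simp add: sat_set_def)
    then show ?thesis using Cons.IH[OF Cons.prems, of "d - fst q"] True by auto
  next
    case False
    then have "s \<notin> sat_set U (snd q)" by (simp add: sat_set_def)
    then show ?thesis using Cons.IH[OF Cons.prems, of d] False by simp
  qed
qed simp

lemma payoff_gt_in_Lx: "set (map snd F) \<subseteq> Lx L Z C \<Longrightarrow> payoff_gt F d \<in> Lx L Z C"
  by (induction F arbitrary: d) auto

lemma sat_set_Exs_subset:
  assumes "sat_set U \<theta> \<subseteq> sat_set U \<psi>" and "fv \<psi> \<inter> set vs = {}"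
  shows "sat_set U (Exs vs \<theta>) \<subseteq> sat_set U \<psi>"
proof
  fix s assume "s \<in> sat_set U (Exs vs \<theta>)"
  then have s: "assignment U s" "sat U s (Exs vs \<theta>)" by (auto simp: sat_set_def)
  obtain s' where s': "assignment U s'" "\<And>n. n \<notin> set vs \<Longrightarrow> s' n = s n" "sat U s' \<theta>"
    by (rule sat_ExsE[OF s]) blast
  then have "sat U s' \<psi>" using assms(1) by (auto simp: sat_set_def)
  moreover have "\<forall>n\<in>fv \<psi>. s' n = s n" using s'(2) assms(2) by blast
  ultimately show "s \<in> sat_set U \<psi>" using s(1) sat_cong by (fastforce simp: sat_set_def)
qed

lemma keisler_price_le_payoff_gt:
  assumes K: "keisler L U Z C m" and F: "set (map snd F) \<subseteq> Lx L Z C"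
    and bounded: "\<forall>s\<in>assignments U. payoff (fm_bet U m F) s \<le> 1"
  shows "price (fm_bet U m F) \<le> m (payoff_gt F 0)"
proof -
  have \<theta>: "payoff_gt F 0 \<in> Lx L Z C" using F by (rule payoff_gt_in_Lx)
  have "price (fm_bet U m (F @ [(-1, payoff_gt F 0)])) \<le> 0"
  proof (rule coherentD[OF keisler_coherent[OF K]])
    show "set (map snd (fm_bet U m (F @ [(-1, payoff_gt F 0)]))) \<subseteq> (\<lambda>\<phi>. (sat_set U \<phi>, m \<phi>)) ` Lx L Z C"
      using F \<theta> unfolding fm_bet_def by auto
    fix s assume s: "s \<in> assignments U"
    then show "payoff (fm_bet U m (F @ [(-1, payoff_gt F 0)])) s \<le> 0"
      using bounded sat_payoff_gt[of U s F 0 m] by (auto simp: sat_set_def split: split_indicator)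
  qed
  then show ?thesis by simp
qed

lemma sat_set_triv_eq: "sat_set U (triv_eq Y) = assignments U"
proof -
  have "sat U s (foldr (\<lambda>v \<phi>. Conj (Eq (Var v) (Var v)) \<phi>) vs Tru)" for s and vs :: "nat list"
    by (induction vs) auto
  then show ?thesis by (auto simp: sat_set_def triv_eq_def)
qed

lemma triv_eq_in_Lx:
  assumes "finite Y"
  shows "triv_eq Y \<in> Lx L Y C"
proof -
  have "foldr (\<lambda>v \<phi>. Conj (Eq (Var v) (Var v)) \<phi>) vs Tru \<in> Lx L (set vs) C" for vs
    by (induction vs) (auto simp: Lx_def)
  from this[of "sorted_list_of_set Y"] show ?thesis using assms by (simp add: triv_eq_def)
qed

locale dominance_witness =
  fixes L :: "('f, 'r) sig" and U :: "('a, 'f, 'r) str" and X Y :: "nat set" and A :: "'a set"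
    and \<mu> \<nu> lam :: "('f, 'r, 'a) fm \<Rightarrow> real"
  assumes finite_X: "finite X" and finite_Y: "finite Y" and disjoint: "X \<inter> Y = {}"
    and A_subset: "A \<subseteq> dom U"
    and smooth_\<mu>: "smooth L U X A \<mu>"
    and keisler_lam: "keisler L U (X \<union> Y) A lam"
    and marg_lam: "agree_on L X A (marg Y lam) \<mu>"
    and lam_forces_\<nu>: "\<And>\<omega>. keisler L U (X \<union> Y) (dom U) \<omega> \<Longrightarrow> agree_on L (X \<union> Y) A \<omega> lam
      \<Longrightarrow> agree_on L X (dom U) (marg Y \<omega>) \<mu> \<Longrightarrow> agree_on L Y (dom U) (marg X \<omega>) \<nu>"
begin

definition lam_book :: "((nat \<Rightarrow> 'a) set \<times> real) set" where
  "lam_book = (\<lambda>\<phi>. (sat_set U \<phi>, lam \<phi>)) ` Lx L (X \<union> Y) A"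

lemma coherent_lam_book: "coherent (assignments U) lam_book"
  unfolding lam_book_def by (rule keisler_coherent[OF keisler_lam])

lemma sure_in_lam_book: "(assignments U, 1) \<in> lam_book"
proof -
  have "(sat_set U Tru, lam Tru) \<in> lam_book" unfolding lam_book_def by (intro imageI) simp
  then show ?thesis using keisler_Tru[OF keisler_lam] by simp
qed

lemma extension_of_lam_book:
  assumes coh: "coherent (assignments U) (range (\<lambda>a. (a, m a)))"
    and ext: "lam_book \<subseteq> range (\<lambda>a. (a, m a))"
    and \<psi>: "\<psi> \<in> Lx L Y (dom U)"
  shows "m (sat_set U \<psi>) = \<nu> \<psi>"
proof -
  have m_lam: "m (sat_set U \<phi>) = lam \<phi>" if "\<phi> \<in> Lx L (X \<union> Y) A" for \<phi>
    using ext that unfolding lam_book_def by auto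
  define \<omega> where "\<omega> \<phi> = m (sat_set U \<phi>)" for \<phi>
  have marg_\<omega>: "marg Z \<omega> = \<omega>" for Z
    unfolding marg_def \<omega>_def by (simp add: sat_set_triv_eq Int_absorb2 sat_set_subset_assignments)
  have "m (assignments U) = 1" using m_lam[of Tru] keisler_Tru[OF keisler_lam] by simp
  then have keisler_\<omega>: "keisler L U Z (dom U) \<omega>" for Z
    unfolding \<omega>_def using coh by (intro keisler_of_coherent)
  have "agree_on L X A (marg Y \<omega>) \<mu>"
    unfolding agree_on_def
  proof
    fix \<phi> assume \<phi>: "\<phi> \<in> Lx L X A"
    have "Conj \<phi> (triv_eq Y) \<in> Lx L (X \<union> Y) A"
      using Lx_mono[OF \<phi>, of "X \<union> Y" A] Lx_mono[OF triv_eq_in_Lx[OF finite_Y, of L A], of "X \<union> Y" A] by simp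
    then have "marg Y \<omega> \<phi> = marg Y lam \<phi>" unfolding marg_def \<omega>_def by (rule m_lam)
    also have "\<dots> = \<mu> \<phi>" using marg_lam \<phi> unfolding agree_on_def by simp
    finally show "marg Y \<omega> \<phi> = \<mu> \<phi>" .
  qed
  then have "agree_on L X (dom U) (marg Y \<omega>) \<mu>"
    using smooth_\<mu> keisler_\<omega> unfolding smooth_def marg_\<omega> by blast
  moreover have "agree_on L (X \<union> Y) A \<omega> lam" unfolding agree_on_def \<omega>_def using m_lam by simp
  ultimately have "agree_on L Y (dom U) (marg X \<omega>) \<nu>" using lam_forces_\<nu> keisler_\<omega> by blast
  then show ?thesis using \<psi> unfolding agree_on_def marg_\<omega> \<omega>_def by blast
qed

lemma lam_eq_\<nu>: "\<chi> \<in> Lx L Y A \<Longrightarrow> lam \<chi> = \<nu> \<chi>"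
proof -
  assume \<chi>: "\<chi> \<in> Lx L Y A"
  obtain m where coh: "coherent (assignments U) (range (\<lambda>a. (a, m a)))"
    and ext: "lam_book \<subseteq> range (\<lambda>a. (a, m a))"
    using coherent_extend_total[OF coherent_lam_book sure_in_lam_book] by blast
  have "\<chi> \<in> Lx L (X \<union> Y) A" using Lx_mono[OF \<chi>] by simp
  then have "(sat_set U \<chi>, lam \<chi>) \<in> range (\<lambda>a. (a, m a))" using ext unfolding lam_book_def by blast
  moreover have "m (sat_set U \<chi>) = \<nu> \<chi>"
    using extension_of_lam_book[OF coh ext] Lx_mono[OF \<chi>] A_subset by simp
  ultimately show "lam \<chi> = \<nu> \<chi>" by auto
qed

lemma price_le_agreeing_measure:
  assumes K': "keisler L U Y (dom U) \<nu>'" and agree: "agree_on L Y A \<nu>' \<nu>"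
    and F: "set (map snd F) \<subseteq> Lx L (X \<union> Y) A" and \<psi>: "\<psi> \<in> Lx L Y (dom U)"
    and bounded: "\<forall>s\<in>assignments U. payoff (fm_bet U lam F) s \<le> indicator (sat_set U \<psi>) s"
  shows "price (fm_bet U lam F) \<le> \<nu>' \<psi>"
proof -
  define \<theta> where "\<theta> = payoff_gt F 0"
  define \<chi> where "\<chi> = Exs (sorted_list_of_set X) \<theta>"
  have \<theta>_Lx: "\<theta> \<in> Lx L (X \<union> Y) A" unfolding \<theta>_def using F by (rule payoff_gt_in_Lx)
  have \<chi>_Lx: "\<chi> \<in> Lx L Y A" using \<theta>_Lx finite_X unfolding \<chi>_def Lx_def by auto
  have "price (fm_bet U lam F) \<le> lam \<theta>"
    unfolding \<theta>_def using keisler_lam F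
  proof (rule keisler_price_le_payoff_gt)
    show "\<forall>s\<in>assignments U. payoff (fm_bet U lam F) s \<le> 1"
      using bounded by (meson indicator_le_1 order_trans)
  qed
  also have "\<dots> \<le> lam \<chi>"
    by (rule keisler_mono[OF keisler_lam \<theta>_Lx]) (use \<chi>_Lx in \<open>auto simp: sat_set_def \<chi>_def intro: Lx_mono sat_ExsI\<close>)
  also have "\<dots> = \<nu>' \<chi>" using lam_eq_\<nu>[OF \<chi>_Lx] agree \<chi>_Lx unfolding agree_on_def by simp
  also have "\<dots> \<le> \<nu>' \<psi>"
  proof (rule keisler_mono[OF K' _ \<psi>])
    show "\<chi> \<in> Lx L Y (dom U)" using Lx_mono[OF \<chi>_Lx] A_subset by simp
    have "sat_set U \<theta> \<subseteq> sat_set U \<psi>"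
      using bounded sat_payoff_gt[of U _ F 0 lam]
      by (force simp: \<theta>_def sat_set_def split: split_indicator_asm)
    moreover have "fv \<psi> \<inter> set (sorted_list_of_set X) = {}" using \<psi> disjoint finite_X by (auto simp: Lx_def)
    ultimately show "sat_set U \<chi> \<subseteq> sat_set U \<psi>" unfolding \<chi>_def by (rule sat_set_Exs_subset)
  qed
  finally show ?thesis .
qed

lemma bet_on_lam_book:
  "set (map snd B) \<subseteq> lam_book \<Longrightarrow> \<exists>F. set (map snd F) \<subseteq> Lx L (X \<union> Y) A \<and> B = fm_bet U lam F"
  unfolding lam_book_def by (rule bet_on_fm_quotes)

lemma coherent_insert_agreeing_measure:
  assumes K': "keisler L U Y (dom U) \<nu>'" and agree: "agree_on L Y A \<nu>' \<nu>"
    and \<psi>: "\<psi> \<in> Lx L Y (dom U)"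
  shows "coherent (assignments U) (insert (sat_set U \<psi>, \<nu>' \<psi>) lam_book)"
proof (rule coherent_insert[OF coherent_lam_book sure_in_lam_book])
  fix B assume "set (map snd B) \<subseteq> lam_book"
    and "\<forall>x\<in>assignments U. payoff B x \<le> indicator (sat_set U \<psi>) x"
  then show "price B \<le> \<nu>' \<psi>"
    using price_le_agreeing_measure[OF K' agree _ \<psi>] by (blast dest: bet_on_lam_book)
next
  fix B assume "set (map snd B) \<subseteq> lam_book"
    and bounded: "\<forall>x\<in>assignments U. payoff B x \<le> indicator (assignments U - sat_set U \<psi>) x"
  then obtain F where F: "set (map snd F) \<subseteq> Lx L (X \<union> Y) A" and B: "B = fm_bet U lam F"
    by (blast dest: bet_on_lam_book)
  have "price B \<le> \<nu>' (Neg \<psi>)"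
    unfolding B by (rule price_le_agreeing_measure[OF K' agree F]) (use \<psi> bounded B in simp_all)
  then show "price B \<le> 1 - \<nu>' \<psi>" using keisler_Neg[OF K' \<psi>] by simp
qed

theorem smooth_\<nu>: "smooth L U Y A \<nu>"
  unfolding smooth_def
proof (intro allI impI, elim conjE)
  fix \<nu>' assume K': "keisler L U Y (dom U) \<nu>'" and agree: "agree_on L Y A \<nu>' \<nu>"
  show "agree_on L Y (dom U) \<nu>' \<nu>"
    unfolding agree_on_def
  proof
    fix \<psi> assume \<psi>: "\<psi> \<in> Lx L Y (dom U)"
    obtain m where coh: "coherent (assignments U) (range (\<lambda>a. (a, m a)))"
      and ext: "insert (sat_set U \<psi>, \<nu>' \<psi>) lam_book \<subseteq> range (\<lambda>a. (a, m a))"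
      using coherent_extend_total[OF coherent_insert_agreeing_measure[OF K' agree \<psi>]] sure_in_lam_book
      by blast
    then have "m (sat_set U \<psi>) = \<nu> \<psi>" by (intro extension_of_lam_book[OF coh _ \<psi>]) auto
    moreover have "m (sat_set U \<psi>) = \<nu>' \<psi>" using ext by auto
    ultimately show "\<nu>' \<psi> = \<nu> \<psi>" by simp
  qed
qed

end

theorem proposition4p7:
  fixes L :: "('f, 'r) sig"
    and T :: "('f, 'r, 'a) fm set"
    and \<kappa> :: "'k rel"
    and U :: "('a, 'f, 'r) str"
    and A :: "'a set"
    and X Y :: "nat set"
    and \<mu> \<nu> :: "('f, 'r, 'a) fm \<Rightarrow> real"
  assumes "complete_theory L T"
    and "monster L T \<kappa> U"
    and "A \<subseteq> dom U" and "small \<kappa> A"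
    and "finite X" and "finite Y" and "X \<inter> Y = {}"
    and "keisler L U X (dom U) \<mu>"
    and "keisler L U Y (dom U) \<nu>"
    and "smooth L U X A \<mu>"
    and "E_geq L U X Y A \<mu> \<nu>"
  shows "smooth L U Y A \<nu>"
proof -
  from \<open>E_geq L U X Y A \<mu> \<nu>\<close> obtain lam where "keisler L U (X \<union> Y) A lam"
    and "agree_on L X A (marg Y lam) \<mu>"
    and "\<And>\<omega>. keisler L U (X \<union> Y) (dom U) \<omega> \<Longrightarrow> agree_on L (X \<union> Y) A \<omega> lam
      \<Longrightarrow> agree_on L X (dom U) (marg Y \<omega>) \<mu> \<Longrightarrow> agree_on L Y (dom U) (marg X \<omega>) \<nu>"
    unfolding E_geq_def by blast
  then interpret dominance_witness L U X Y A \<mu> \<nu> lam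
    using assms by unfold_locales
  show ?thesis by (rule smooth_\<nu>)
qed

end
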